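(* Let $\mathcal A$ be a cluster algebra and let $H_1,H_2$ be subgroups of $\mathrm{Aut}\,\mathcal A$ with $H_1,H_2\notin\ker\phi$, i.e. $\mathcal M^{H_1}_{sub}\neq\emptyset$ and $\mathcal M^{H_2}_{sub}\neq\emptyset$. Then $H_1$ and $H_2$ are conjugate in $\mathrm{Aut}\,\mathcal A$ if and only if there exist $f\in\mathrm{Aut}\,\mathcal A$, $\mathcal A(\Sigma_1)\in\mathcal M^{H_1}_{sub}$ and $\mathcal A(\Sigma_2)\in\mathcal M^{H_2}_{sub}$ such that $f(\mathcal A(\Sigma_1))=\mathcal A(\Sigma_2)$ and the restriction of $f$ is a cluster isomorphism $\mathcal A(\Sigma_1)\to\mathcal A(\Sigma_2)$.
   Context: Cluster algebras: a seed is $\Sigma=(\mathbf x_{ex},\mathbf x_{fr},\widetilde B)$ with exchange variables $\mathbf x_{ex}=\{x_1,\dots,x_n\}$ and frozen variables $\mathbf x_{fr}=\{x_{n+1},\dots,x_m\}$ algebraically independent in $\mathcal F=\mathbb Q(x_1,\dots,x_m)$, and $\widetilde B=(b_{ij})$ an $m\times n$ integer matrix whose upper $n\times n$ part is skew-symmetrizable; entries are also indexed by variables, $b_{xy}$. Seeds mutate by the Fomin–Zelevinsky mutation rule at exchange variables; the cluster algebra $\mathcal A(\Sigma)$ is the $\mathbb Q$-subalgebra of $\mathcal F$ generated by all (exchange and frozen) cluster variables of all seeds obtained from $\Sigma$ by finitely many mutations. A cluster automorphism (resp. cluster isomorphism) is an algebra automorphism (resp. isomorphism) sending the extended cluster $\mathbf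 x_{ex}\cup\mathbf x_{fr}$ of a seed bijectively onto the extended cluster of a seed, exchange variables to exchange variables, and commuting with mutations ($f(\mu_x(y))=\mu_{f(x)}(f(y))$ along admissible mutation sequences); $\mathrm{Aut}\,\mathcal A$ is the group of cluster automorphisms. Mixing-type sub-seed: for a seed $\Sigma$ and $I_0\subseteq\mathbf x_{ex}$, $I_1\subseteq\mathbf x_{ex}\cup\mathbf x_{fr}$ with $I_0\cap I_1=\emptyset$, $\Sigma_{I_0,I_1}=(\mathbf x_{ex}\setminus(I_0\cup I_1),(\mathbf x_{fr}\cup I_0)\setminus I_1,\widetilde B^\sharp)$ where $\widetilde B^\sharp$ is the submatrix of $\widetilde B$ with rows indexed by the new extended cluster and columns by the new exchange variables. A cluster subalgebra of $\mathcal A$ is $\mathcal A(\Sigma')\subseteq\mathcal A$ with $\Sigma'=\Sigma_{I_0,I_1}$ for some seed $\Sigma$ of $\mathcal A$ such that $b_{xy}=0$ for all $x\in I_1$, $y\in\mathbf x_{ex}\setminus(I_0\cup I_1)$. Galois notions: for a cluster subalgebra $\mathcal A(\Sigma')$, $\mathrm{Gal}_{\Sigma'}\mathcal A=\{f\in\mathrm{Aut}\,\mathcal A: f|_{\mathcal A(\Sigma')}=\mathrm{id}\}$. For $H\le\mathrm{Aut}\,\mathcal A$, $\mathcal A^H=\{z\in\mathcal A: f(z)=z\ \forall f\in H\}$, and $\mathcal M^H_{sub}$ is the set of cluster subalgebras $\mathcal A(\Sigma')$ of $\mathcal A$ that are maximal (under inclusion) among cluster subalgebras of $\mathcal A$ contained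 in $\mathcal A^H$ and satisfy $\mathrm{Gal}_{\Sigma'}\mathcal A=H$. $\phi$ is the map $H\mapsto\mathcal M^H_{sub}$ and $\ker\phi=\{H\le\mathrm{Aut}\,\mathcal A:\mathcal M^H_{sub}=\emptyset\}$. *)

theory Defs
  imports Complex_Main
begin

text \<open>A seed lives in an ambient field 'a of characteristic 0 (playing the role of
F = Q(x_1,...,x_m)).  Variables are indexed by natural numbers: cl gives the
cluster variable at an index, ex is the set of exchange indices, fr the set of
frozen indices, mat the (extended) exchange matrix, read at rows in ex \<union> fr and
columns in ex.\<close>

record 'a seed =
  cl  :: "nat \<Rightarrow> 'a"
  ex  :: "nat set"
  fr  :: "nat set"
  mat :: "nat \<Rightarrow> nat \<Rightarrow> int"

definition ext :: "'a seed \<Rightarrow> nat set" where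
  "ext S = ex S \<union> fr S"

definition alg_indep :: "(nat \<Rightarrow> 'a::field_char_0) \<Rightarrow> nat set \<Rightarrow> bool" where
  "alg_indep x I \<longleftrightarrow>
     (\<forall>(M :: (nat \<Rightarrow> nat) set) (c :: (nat \<Rightarrow> nat) \<Rightarrow> rat).
        finite M \<longrightarrow> (\<forall>e\<in>M. \<forall>i. i \<notin> I \<longrightarrow> e i = 0) \<longrightarrow>
        (\<Sum>e\<in>M. of_rat (c e) * (\<Prod>i\<in>I. x i ^ e i)) = 0 \<longrightarrow>
        (\<forall>e\<in>M. c e = 0))"

definition skew_symmetrizable :: "nat set \<Rightarrow> (nat \<Rightarrow> nat \<Rightarrow> int) \<Rightarrow> bool" where
  "skew_symmetrizable E B \<longleftrightarrow>
     (\<exists>d :: nat \<Rightarrow> int. (\<forall>i\<in>E. d i > 0) \<and>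
        (\<forall>i\<in>E. \<forall>j\<in>E. d i * B i j = - (d j * B j i)))"

definition valid_seed :: "('a::field_char_0) seed \<Rightarrow> bool" where
  "valid_seed S \<longleftrightarrow> finite (ex S) \<and> finite (fr S) \<and> ex S \<inter> fr S = {} \<and>
     alg_indep (cl S) (ext S) \<and> skew_symmetrizable (ex S) (mat S)"

definition mutate :: "nat \<Rightarrow> ('a::field_char_0) seed \<Rightarrow> 'a seed" where
  "mutate k S =
     S\<lparr> cl := (cl S)(k :=
           ((\<Prod>i\<in>{i\<in>ext S. mat S i k > 0}. cl S i ^ nat (mat S i k)) +
            (\<Prod>i\<in>{i\<in>ext S. mat S i k < 0}. cl S i ^ nat (- mat S i k))) / cl S k),
        mat := (\<lambda>i j. if i = k \<or> j = k then - mat S i j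
                      else mat S i j +
                        (\<bar>mat S i k\<bar> * mat S k j + mat S i k * \<bar>mat S k j\<bar>) div 2) \<rparr>"

definition mutseq :: "nat list \<Rightarrow> ('a::field_char_0) seed \<Rightarrow> 'a seed" where
  "mutseq ks S = fold mutate ks S"

definition mclass :: "('a::field_char_0) seed \<Rightarrow> 'a seed set" where
  "mclass S = {mutseq ks S | ks. set ks \<subseteq> ex S}"

definition cvars :: "('a::field_char_0) seed \<Rightarrow> 'a set" where
  "cvars S = (\<Union>T\<in>mclass S. cl T ` ext T)"

inductive_set qalg :: "('a::field_char_0) set \<Rightarrow> 'a set" for G where
  gen: "x \<in> G \<Longrightarrow> x \<in> qalg G"
| rat: "of_rat q \<in> qalg G"
| add: "x \<in> qalg G \<Longrightarrow> y \<in> qalg G \<Longrightarrow> x + y \<in> qalg G"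
| mult: "x \<in> qalg G \<Longrightarrow> y \<in> qalg G \<Longrightarrow> x * y \<in> qalg G"

definition cluster_alg :: "('a::field_char_0) seed \<Rightarrow> 'a set" where
  "cluster_alg S = qalg (cvars S)"

definition cluster_iso :: "('a::field_char_0) seed \<Rightarrow> 'a seed \<Rightarrow> ('a \<Rightarrow> 'a) \<Rightarrow> bool" where
  "cluster_iso S1 S2 f \<longleftrightarrow>
     bij_betw f (cluster_alg S1) (cluster_alg S2) \<and>
     (\<forall>x\<in>cluster_alg S1. \<forall>y\<in>cluster_alg S1. f (x + y) = f x + f y \<and> f (x * y) = f x * f y) \<and>
     f 1 = 1 \<and>
     (\<exists>T\<in>mclass S1. \<exists>T'\<in>mclass S2. \<exists>\<sigma>.
        bij_betw \<sigma> (ext T) (ext T') \<and> \<sigma> ` ex T = ex T' \<and>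
        (\<forall>ks. set ks \<subseteq> ex T \<longrightarrow>
           (\<forall>i\<in>ext T. f (cl (mutseq ks T) i) = cl (mutseq (map \<sigma> ks) T') (\<sigma> i))))"

text \<open>Cluster automorphisms of A(S0), normalised to be the identity outside A(S0)
so that they form a group under composition.\<close>
definition Aut :: "('a::field_char_0) seed \<Rightarrow> ('a \<Rightarrow> 'a) set" where
  "Aut S0 = {f. cluster_iso S0 S0 f \<and> (\<forall>x. x \<notin> cluster_alg S0 \<longrightarrow> f x = x)}"

definition aut_inv :: "('a::field_char_0) seed \<Rightarrow> ('a \<Rightarrow> 'a) \<Rightarrow> ('a \<Rightarrow> 'a)" where
  "aut_inv S0 f = (\<lambda>y. if y \<in> cluster_alg S0 then inv_into (cluster_alg S0) f y else y)"

definition aut_subgroup :: "('a::field_char_0) seed \<Rightarrow> ('a \<Rightarrow> 'a) set \<Rightarrow> bool" where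
  "aut_subgroup S0 H \<longleftrightarrow> H \<subseteq> Aut S0 \<and> id \<in> H \<and>
     (\<forall>g\<in>H. \<forall>h\<in>H. g \<circ> h \<in> H) \<and> (\<forall>h\<in>H. aut_inv S0 h \<in> H)"

definition conjugate :: "('a::field_char_0) seed \<Rightarrow> ('a \<Rightarrow> 'a) set \<Rightarrow> ('a \<Rightarrow> 'a) set \<Rightarrow> bool" where
  "conjugate S0 H1 H2 \<longleftrightarrow> (\<exists>g\<in>Aut S0. H2 = (\<lambda>h. g \<circ> h \<circ> aut_inv S0 g) ` H1)"

definition subseed :: "'a seed \<Rightarrow> nat set \<Rightarrow> nat set \<Rightarrow> 'a seed" where
  "subseed S I0 I1 = S\<lparr> ex := ex S - (I0 \<union> I1), fr := (fr S \<union> I0) - I1 \<rparr>"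

definition cluster_subseed :: "('a::field_char_0) seed \<Rightarrow> 'a seed \<Rightarrow> bool" where
  "cluster_subseed S0 S' \<longleftrightarrow>
     (\<exists>S\<in>mclass S0. \<exists>I0 I1. I0 \<subseteq> ex S \<and> I1 \<subseteq> ext S \<and> I0 \<inter> I1 = {} \<and>
        S' = subseed S I0 I1 \<and>
        (\<forall>x\<in>I1. \<forall>y\<in>ex S'. mat S x y = 0) \<and>
        cluster_alg S' \<subseteq> cluster_alg S0)"

definition cluster_subalgs :: "('a::field_char_0) seed \<Rightarrow> 'a set set" where
  "cluster_subalgs S0 = {cluster_alg S' | S'. cluster_subseed S0 S'}"

definition Gal :: "('a::field_char_0) seed \<Rightarrow> 'a set \<Rightarrow> ('a \<Rightarrow> 'a) set" where
  "Gal S0 B = {f \<in> Aut S0. \<forall>z\<in>B. f z = z}"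

definition fixalg :: "('a::field_char_0) seed \<Rightarrow> ('a \<Rightarrow> 'a) set \<Rightarrow> 'a set" where
  "fixalg S0 H = {z \<in> cluster_alg S0. \<forall>f\<in>H. f z = z}"

definition M_sub :: "('a::field_char_0) seed \<Rightarrow> ('a \<Rightarrow> 'a) set \<Rightarrow> 'a set set" where
  "M_sub S0 H = {B \<in> cluster_subalgs S0. B \<subseteq> fixalg S0 H \<and>
      (\<forall>C\<in>cluster_subalgs S0. C \<subseteq> fixalg S0 H \<longrightarrow> B \<subseteq> C \<longrightarrow> C = B) \<and>
      Gal S0 B = H}"

end

theory Submission
  imports Defs "HOL-Library.Multiset"
begin

text \<open>Conjugation by an automorphism g transports all the Galois data: g maps cluster subalgebras
  to cluster subalgebras, the fixed algebra of H onto that of g H g^-1, and satisfies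
  Gal (g B) = g Gal(B) g^-1.  Hence g maps M_sub(H) into M_sub(g H g^-1), which gives the forward
  direction; the converse is this identity for Gal.

  To transport a cluster subalgebra one carries the sub-seed data along the index bijection of g.
  The vanishing condition on the exchange matrix survives because g maps exchange binomials to
  exchange binomials, and two binomials in algebraically independent variables agree only
  monomial by monomial.  Since g is only known to commute with mutations from one particular
  seed, one also needs that the mutation class is connected; this rests on mutation being an
  involution, which in turn needs that mutation preserves algebraic independence.\<close>

section \<open>Monomials and algebraic independence\<close>

definition monomial :: "(nat \<Rightarrow> 'a::comm_monoid_mult) \<Rightarrow> nat set \<Rightarrow> (nat \<Rightarrow> nat) \<Rightarrow> 'a" where
  "monomial x I e = (\<Prod>i\<in>I. x i ^ e i)"

definition supported_on :: "(nat \<Rightarrow> nat) \<Rightarrow> nat set \<Rightarrow> bool" where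
  "supported_on e I \<longleftrightarrow> (\<forall>i. i \<notin> I \<longrightarrow> e i = 0)"

lemma monomial_zero [simp]: "monomial x I (\<lambda>_. 0) = 1"
  unfolding monomial_def by simp

lemma monomial_add: "monomial x I (\<lambda>i. e i + f i) = monomial x I e * monomial x I f"
  unfolding monomial_def by (simp add: power_add prod.distrib)

lemma monomial_fun_upd:
  assumes "finite I" "k \<in> I" "e k = 0"
  shows "monomial x I (e(k := j)) = monomial x I e * x k ^ j"
  using assms unfolding monomial_def by (simp add: prod.remove mult.commute)

lemma monomial_unit:
  "finite I \<Longrightarrow> k \<in> I \<Longrightarrow> monomial x I ((\<lambda>_. 0)(k := 1)) = x k"
  by (simp add: monomial_fun_upd)

lemma prod_power_eq_monomial:
  assumes "finite I" "A \<subseteq> I"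
  shows "(\<Prod>i\<in>A. x i ^ n i) = monomial x I (\<lambda>i. if i \<in> A then n i else 0)"
proof -
  have "monomial x I (\<lambda>i. if i \<in> A then n i else 0) = (\<Prod>i\<in>I. if i \<in> A then x i ^ n i else 1)"
    unfolding monomial_def by (rule prod.cong) auto
  also have "\<dots> = (\<Prod>i\<in>A. x i ^ n i)"
    using prod.inter_restrict[OF assms(1), of "\<lambda>i. x i ^ n i" A] assms(2)
    by (simp add: Int_absorb1)
  finally show ?thesis by simp
qed

lemma alg_indepD:
  assumes "alg_indep x I" "finite M" "\<forall>e\<in>M. supported_on e I"
    and "(\<Sum>e\<in>M. of_rat (c e) * monomial x I e) = 0" "e \<in> M"
  shows "c e = 0"
  using assms unfolding alg_indep_def supported_on_def monomial_def by blast

lemma sum_mset_eq_sum_count: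
  fixes f :: "'b \<Rightarrow> 'c::comm_semiring_1"
  assumes "finite S" "set_mset A \<subseteq> S"
  shows "(\<Sum>e\<in>#A. f e) = (\<Sum>e\<in>S. of_nat (count A e) * f e)"
  using assms(2)
proof (induction A)
  case (add a A)
  have "(\<Sum>e\<in>S. of_nat (count (add_mset a A) e) * f e)
      = (\<Sum>e\<in>S. of_nat (count A e) * f e + (if e = a then f e else 0))"
    by (rule sum.cong) (auto simp: algebra_simps)
  also have "\<dots> = (\<Sum>e\<in>S. of_nat (count A e) * f e) + f a"
    using add.prems assms(1) by (simp add: sum.distrib)
  finally show ?case using add by (simp add: ac_simps)
qed simp

lemma alg_indep_sum_mset_monomial_eq:
  assumes indep: "alg_indep x I"
    and "\<forall>e\<in>#A. supported_on e I" "\<forall>e\<in>#B. supported_on e I"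
    and eq: "(\<Sum>e\<in>#A. monomial x I e) = (\<Sum>e\<in>#B. monomial x I e)"
  shows "A = B"
proof -
  define S where "S = set_mset (A + B)"
  define c where "c e = (of_nat (count A e) - of_nat (count B e) :: rat)" for e
  have fin: "finite S" unfolding S_def by simp
  have "(\<Sum>e\<in>S. of_rat (c e) * monomial x I e)
       = (\<Sum>e\<in>S. of_nat (count A e) * monomial x I e) - (\<Sum>e\<in>S. of_nat (count B e) * monomial x I e)"
    unfolding c_def by (simp add: of_rat_diff algebra_simps sum_subtractf)
  also have "\<dots> = 0"
    using sum_mset_eq_sum_count[OF fin, of A "monomial x I"]
      sum_mset_eq_sum_count[OF fin, of B "monomial x I"] eq
    unfolding S_def by auto
  finally have "c e = 0" if "e \<in> S" for e
    using alg_indepD[OF indep fin _ _ that] assms(2,3) unfolding S_def by auto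
  then have "count A e = count B e" for e
    unfolding c_def S_def by (cases "e \<in># A + B") (auto simp: not_in_iff)
  then show ?thesis by (simp add: multiset_eqI)
qed

lemma alg_indep_nonzero:
  assumes "alg_indep x I" "finite I" "k \<in> I"
  shows "x k \<noteq> 0"
proof
  assume "x k = 0"
  then have "(\<Sum>e\<in>#{#(\<lambda>_. 0)(k := 1)#}. monomial x I e) = (\<Sum>e\<in>#{#}. monomial x I e)"
    using monomial_unit[OF assms(2,3), of x] by simp
  then have "{#(\<lambda>_. 0 :: nat)(k := 1)#} = {#}"
    by (intro alg_indep_sum_mset_monomial_eq[OF assms(1)]) (use assms(3) in \<open>auto simp: supported_on_def\<close>)
  then show False by simp
qed

lemma alg_indep_monomial_add_nonzero:
  assumes "alg_indep x I" "supported_on p I" "supported_on q I"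
  shows "monomial x I p + monomial x I q \<noteq> 0"
proof
  assume "monomial x I p + monomial x I q = 0"
  then have "{#p, q#} = {#}"
    by (intro alg_indep_sum_mset_monomial_eq[OF assms(1)]) (use assms(2,3) in auto)
  then show False by simp
qed

lemma alg_indep_monomial_add_eq:
  assumes "alg_indep x I" "supported_on p I" "supported_on q I" "supported_on p' I" "supported_on q' I"
    and "monomial x I p + monomial x I q = monomial x I p' + monomial x I q'"
  shows "(p = p' \<and> q = q') \<or> (p = q' \<and> q = p')"
proof -
  have "{#p, q#} = {#p', q'#}"
    by (intro alg_indep_sum_mset_monomial_eq[OF assms(1)]) (use assms(2-6) in auto)
  then show ?thesis by (auto simp: add_eq_conv_diff)
qed

lemma qalg_subset_qalg: "G \<subseteq> qalg G' \<Longrightarrow> qalg G \<subseteq> qalg G'"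
proof
  fix v assume "G \<subseteq> qalg G'" "v \<in> qalg G"
  from this(2,1) show "v \<in> qalg G'" by (induction rule: qalg.induct) (auto intro: qalg.intros)
qed

lemma qalg_zero: "0 \<in> qalg G" and qalg_one: "1 \<in> qalg G"
  using qalg.rat[of 0 G] qalg.rat[of 1 G] by simp_all

lemma qalg_power: "v \<in> qalg G \<Longrightarrow> v ^ n \<in> qalg G"
  by (induction n) (auto intro: qalg.intros qalg_one)

lemma qalg_prod: "(\<And>i. i \<in> F \<Longrightarrow> f i \<in> qalg G) \<Longrightarrow> prod f F \<in> qalg G"
  by (induction F rule: infinite_finite_induct) (auto intro: qalg.intros qalg_one)

lemma qalg_sum: "(\<And>i. i \<in> F \<Longrightarrow> f i \<in> qalg G) \<Longrightarrow> sum f F \<in> qalg G"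
  by (induction F rule: infinite_finite_induct) (auto intro: qalg.intros qalg_zero)

lemma monomial_in_qalg:
  "(\<And>i. i \<in> I \<Longrightarrow> e i \<noteq> 0 \<Longrightarrow> x i \<in> qalg G) \<Longrightarrow> monomial x I e \<in> qalg G"
  unfolding monomial_def by (rule qalg_prod) (metis power_0 qalg_one qalg_power)

definition monomial_span :: "(nat \<Rightarrow> 'a::field_char_0) \<Rightarrow> nat set \<Rightarrow> nat set \<Rightarrow> 'a set" where
  "monomial_span x I J = {v. \<exists>M c. finite M \<and> (\<forall>e\<in>M. supported_on e J) \<and>
      v = (\<Sum>e\<in>M. of_rat (c e) * monomial x I e)}"

lemma sum_monomial_in_span:
  assumes "finite P" "\<forall>p\<in>P. supported_on (m p) J"
  shows "(\<Sum>p\<in>P. of_rat (d p) * monomial x I (m p)) \<in> monomial_span x I J"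
proof -
  define c where "c e = (\<Sum>p\<in>{p\<in>P. m p = e}. d p)" for e
  have "(\<Sum>e\<in>m ` P. of_rat (c e) * monomial x I e)
      = (\<Sum>e\<in>m ` P. \<Sum>p\<in>{p\<in>P. m p = e}. of_rat (d p) * monomial x I (m p))"
    unfolding c_def of_rat_sum sum_distrib_right by (rule sum.cong) auto
  also have "\<dots> = (\<Sum>p\<in>P. of_rat (d p) * monomial x I (m p))"
    by (rule sum.group) (use assms in auto)
  finally show ?thesis
    unfolding monomial_span_def using assms by (intro CollectI exI[of _ "m ` P"] exI[of _ c]) auto
qed

lemma monomial_span_add:
  assumes "v \<in> monomial_span x I J" "w \<in> monomial_span x I J"
  shows "v + w \<in> monomial_span x I J"
proof -
  obtain M c where M: "finite M" "\<forall>e\<in>M. supported_on e J" "v = (\<Sum>e\<in>M. of_rat (c e) * monomial x I e)"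
    using assms(1) unfolding monomial_span_def by blast
  obtain N d where N: "finite N" "\<forall>e\<in>N. supported_on e J" "w = (\<Sum>e\<in>N. of_rat (d e) * monomial x I e)"
    using assms(2) unfolding monomial_span_def by blast
  have "v + w = (\<Sum>p\<in>M <+> N. of_rat (case_sum c d p) * monomial x I (case_sum id id p))"
    using M N by (simp add: sum.Plus comp_def)
  also have "\<dots> \<in> monomial_span x I J"
    by (rule sum_monomial_in_span) (use M N in \<open>auto elim!: PlusE\<close>)
  finally show ?thesis .
qed

lemma monomial_span_mult:
  assumes "v \<in> monomial_span x I J" "w \<in> monomial_span x I J"
  shows "v * w \<in> monomial_span x I J"
proof -
  obtain M c where M: "finite M" "\<forall>e\<in>M. supported_on e J" "v = (\<Sum>e\<in>M. of_rat (c e) * monomial x I e)"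
    using assms(1) unfolding monomial_span_def by blast
  obtain N d where N: "finite N" "\<forall>e\<in>N. supported_on e J" "w = (\<Sum>e\<in>N. of_rat (d e) * monomial x I e)"
    using assms(2) unfolding monomial_span_def by blast
  have "v * w = (\<Sum>e\<in>M. \<Sum>f\<in>N. of_rat (c e) * monomial x I e * (of_rat (d f) * monomial x I f))"
    using M N by (simp add: sum_product)
  also have "\<dots> = (\<Sum>p\<in>M \<times> N. of_rat (c (fst p) * d (snd p)) * monomial x I (\<lambda>i. fst p i + snd p i))"
    by (simp add: sum.cartesian_product monomial_add of_rat_mult split_def mult_ac)
  also have "\<dots> \<in> monomial_span x I J"
    by (rule sum_monomial_in_span) (use M N in \<open>auto simp: supported_on_def\<close>)
  finally show ?thesis .
qed

lemma qalg_subset_monomial_span: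
  assumes "finite I" "J \<subseteq> I"
  shows "qalg (x ` J) \<subseteq> monomial_span x I J"
proof
  fix v assume "v \<in> qalg (x ` J)"
  then show "v \<in> monomial_span x I J"
  proof (induction rule: qalg.induct)
    case (gen v)
    then obtain j where j: "j \<in> J" "v = x j" by auto
    have "(\<Sum>p\<in>{j}. of_rat 1 * monomial x I ((\<lambda>_. 0)(p := 1))) \<in> monomial_span x I J"
      by (rule sum_monomial_in_span) (use j in \<open>auto simp: supported_on_def\<close>)
    then show ?case using j assms monomial_unit[OF assms(1), of j x] by auto
  next
    case (rat q)
    have "(\<Sum>p\<in>{()}. of_rat q * monomial x I (\<lambda>_. 0)) \<in> monomial_span x I J"
      by (rule sum_monomial_in_span) (auto simp: supported_on_def)
    then show ?case by simp
  qed (auto intro: monomial_span_add monomial_span_mult)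
qed

lemma alg_indep_transcendental:
  assumes indep: "alg_indep x I" and fin: "finite I" and k: "k \<in> I" and finJ: "finite Js"
    and coeff: "\<forall>j\<in>Js. g j \<in> qalg (x ` (I - {k}))"
    and zero: "(\<Sum>j\<in>Js. g j * x k ^ j) = 0"
  shows "\<forall>j\<in>Js. g j = 0"
proof -
  have "\<forall>j\<in>Js. g j \<in> monomial_span x I (I - {k})"
    using coeff qalg_subset_monomial_span[OF fin, of "I - {k}" x] by blast
  then obtain M where M: "\<And>j. j \<in> Js \<Longrightarrow> finite (M j)"
      "\<And>j e. j \<in> Js \<Longrightarrow> e \<in> M j \<Longrightarrow> supported_on e (I - {k})"
    and "\<forall>j\<in>Js. \<exists>c. g j = (\<Sum>e\<in>M j. of_rat (c e) * monomial x I e)"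
    unfolding monomial_span_def by (auto dest!: bchoice)
  then obtain c where g: "\<And>j. j \<in> Js \<Longrightarrow> g j = (\<Sum>e\<in>M j. of_rat (c j e) * monomial x I e)"
    by (auto dest!: bchoice)
  have ek: "e k = 0" if "j \<in> Js" "e \<in> M j" for j e
    using M(2)[OF that] unfolding supported_on_def by auto
  define h where "h = (\<lambda>(j::nat, e::nat \<Rightarrow> nat). e(k := j))"
  define S where "S = Sigma Js M"
  have finS: "finite S" unfolding S_def using finJ M(1) by auto
  have h_inverse: "(h p k, (h p)(k := 0)) = p" if "p \<in> S" for p
    using that ek unfolding S_def h_def by (auto simp: fun_upd_idem)
  have inj: "inj_on h S"
    by (rule inj_on_inverseI[where g = "\<lambda>E. (E k, E(k := 0))"]) (use h_inverse in simp)
  define C where "C E = c (E k) (E(k := 0))" for E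
  have C_h: "C (h p) = c (fst p) (snd p)" if "p \<in> S" for p
    using h_inverse[OF that] unfolding C_def by (metis fst_conv snd_conv)
  have "0 = (\<Sum>j\<in>Js. \<Sum>e\<in>M j. of_rat (c j e) * monomial x I e * x k ^ j)"
    using zero g by (simp add: sum_distrib_right)
  also have "\<dots> = (\<Sum>p\<in>S. of_rat (c (fst p) (snd p)) * monomial x I (h p))"
    unfolding S_def using finJ M(1)
    by (subst sum.Sigma) (auto intro!: sum.cong simp: h_def monomial_fun_upd[OF fin k] ek)
  also have "\<dots> = (\<Sum>E\<in>h ` S. of_rat (C E) * monomial x I E)"
    using C_h by (simp add: sum.reindex[OF inj])
  finally have "C E = 0" if "E \<in> h ` S" for E
    by (intro alg_indepD[OF indep _ _ _ that])
      (use finS M(2) k in \<open>auto simp: S_def h_def supported_on_def\<close>)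
  then have "c j e = 0" if "j \<in> Js" "e \<in> M j" for j e
    using C_h[of "(j, e)"] that unfolding S_def by force
  then show ?thesis using g by simp
qed

lemma alg_indep_slice:
  assumes indep: "alg_indep x I" and fin: "finite F" and supp: "\<forall>e\<in>F. supported_on e I"
    and slice: "\<forall>e\<in>F. e k = a"
    and zero: "(\<Sum>e\<in>F. of_rat (c e) * monomial x I (e(k := 0))) = 0" and e: "e \<in> F"
  shows "c e = 0"
proof -
  have inj: "inj_on (\<lambda>e. e(k := 0)) F"
    by (rule inj_onI) (metis slice fun_upd_idem fun_upd_upd)
  have rel: "(\<Sum>E\<in>(\<lambda>e. e(k := 0)) ` F. of_rat (c (E(k := a))) * monomial x I E) = 0"
    using zero slice by (simp add: sum.reindex[OF inj])
  have "c ((e(k := 0))(k := a)) = 0"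
    by (rule alg_indepD[where c = "\<lambda>E. c (E(k := a))", OF indep _ _ rel imageI[OF e]])
      (use fin supp in \<open>auto simp: supported_on_def\<close>)
  then show ?thesis using slice e by simp
qed

lemma monomial_exchange_clear_denominator:
  assumes fin: "finite I" and k: "k \<in> I" and le: "e k \<le> N" and z: "z * x k = w"
  shows "(\<Prod>i\<in>I. (x(k := z)) i ^ e i) * x k ^ N = monomial x I (e(k := 0)) * w ^ e k * x k ^ (N - e k)"
proof -
  have "(\<Prod>i\<in>I. (x(k := z)) i ^ e i) = monomial (x(k := z)) I ((e(k := 0))(k := e k))"
    unfolding monomial_def by simp
  also have "\<dots> = monomial (x(k := z)) I (e(k := 0)) * z ^ e k"
    by (subst monomial_fun_upd[OF fin k]) simp_all
  also have "monomial (x(k := z)) I (e(k := 0)) = monomial x I (e(k := 0))"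
    unfolding monomial_def by (rule prod.cong) auto
  moreover have "x k ^ N = x k ^ e k * x k ^ (N - e k)" using le by (simp flip: power_add)
  ultimately show ?thesis unfolding z[symmetric] power_mult_distrib by (simp add: mult_ac)
qed

text \<open>Clearing denominators turns a relation among the new variables into a polynomial identity in
  \<open>x k\<close> over the other variables, whose coefficients must then vanish.\<close>
lemma alg_indep_exchange:
  assumes indep: "alg_indep x I" and fin: "finite I" and k: "k \<in> I"
    and w: "w \<in> qalg (x ` (I - {k}))" "w \<noteq> 0" and z: "z * x k = w"
  shows "alg_indep (x(k := z)) I"
  unfolding alg_indep_def
proof (intro allI impI)
  fix M :: "(nat \<Rightarrow> nat) set" and c :: "(nat \<Rightarrow> nat) \<Rightarrow> rat"
  assume finM: "finite M" and supp0: "\<forall>e\<in>M. \<forall>i. i \<notin> I \<longrightarrow> e i = 0"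
    and rel: "(\<Sum>e\<in>M. of_rat (c e) * (\<Prod>i\<in>I. (x(k := z)) i ^ e i)) = 0"
  have supp: "\<forall>e\<in>M. supported_on e I" using supp0 unfolding supported_on_def .
  define N where "N = Max (insert 0 ((\<lambda>e. e k) ` M))"
  have le: "e k \<le> N" if "e \<in> M" for e unfolding N_def using finM that by (intro Max_ge) auto
  define T where "T e = of_rat (c e) * monomial x I (e(k := 0)) * w ^ e k * x k ^ (N - e k)" for e
  have "T e = of_rat (c e) * (\<Prod>i\<in>I. (x(k := z)) i ^ e i) * x k ^ N" if "e \<in> M" for e
    using monomial_exchange_clear_denominator[where x = x and e = e, OF fin k le[OF that] z]
    unfolding T_def
    by (simp add: mult_ac)
  then have sumT: "(\<Sum>e\<in>M. T e) = 0" using rel by (simp add: sum_distrib_right[symmetric])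
  define Js where "Js = (\<lambda>e. N - e k) ` M"
  define g where "g j = (\<Sum>e\<in>{e\<in>M. N - e k = j}. of_rat (c e) * monomial x I (e(k := 0)) * w ^ e k)" for j
  have "(\<Sum>j\<in>Js. g j * x k ^ j) = (\<Sum>j\<in>Js. \<Sum>e\<in>{e\<in>M. N - e k = j}. T e)"
    unfolding g_def sum_distrib_right T_def by (intro sum.cong) auto
  also have "\<dots> = (\<Sum>e\<in>M. T e)"
    by (rule sum.group) (use finM Js_def in auto)
  finally have rel': "(\<Sum>j\<in>Js. g j * x k ^ j) = 0" using sumT by simp
  have "g j \<in> qalg (x ` (I - {k}))" for j
    unfolding g_def by (intro qalg_sum qalg.mult qalg.rat qalg_power[OF w(1)] monomial_in_qalg qalg.gen) auto
  then have g0: "\<forall>j\<in>Js. g j = 0"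
    using alg_indep_transcendental[OF indep fin k _ _ rel'] finM unfolding Js_def by blast
  show "\<forall>e\<in>M. c e = 0"
  proof
    fix e0 assume e0: "e0 \<in> M"
    define F where "F = {e\<in>M. e k = e0 k}"
    have "{e\<in>M. N - e k = N - e0 k} = F"
      unfolding F_def using le[OF e0] by (auto dest: le)
    then have "0 = w ^ e0 k * (\<Sum>e\<in>F. of_rat (c e) * monomial x I (e(k := 0)))"
      using g0 e0 unfolding g_def Js_def F_def
      by (auto simp: sum_distrib_left mult_ac intro!: sum.cong)
    then have "(\<Sum>e\<in>F. of_rat (c e) * monomial x I (e(k := 0))) = 0" using w(2) by simp
    then show "c e0 = 0"
      by (rule alg_indep_slice[OF indep, rotated 3]) (use finM supp e0 in \<open>auto simp: F_def\<close>)
  qed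
qed

section \<open>Mutation\<close>

definition exch_pos :: "('a::field_char_0) seed \<Rightarrow> nat \<Rightarrow> 'a" where
  "exch_pos S k = (\<Prod>i\<in>{i\<in>ext S. mat S i k > 0}. cl S i ^ nat (mat S i k))"

definition exch_neg :: "('a::field_char_0) seed \<Rightarrow> nat \<Rightarrow> 'a" where
  "exch_neg S k = (\<Prod>i\<in>{i\<in>ext S. mat S i k < 0}. cl S i ^ nat (- mat S i k))"

definition mutation_shift :: "int \<Rightarrow> int \<Rightarrow> int" where
  "mutation_shift a b = \<bar>a\<bar> * b + a * \<bar>b\<bar>"

lemma ex_subset_ext: "ex S \<subseteq> ext S"
  unfolding ext_def by auto

lemma cl_mutate: "cl (mutate k S) = (cl S)(k := (exch_pos S k + exch_neg S k) / cl S k)"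
  unfolding mutate_def exch_pos_def exch_neg_def by simp

lemma mat_mutate: "mat (mutate k S) i j =
    (if i = k \<or> j = k then - mat S i j else mat S i j + mutation_shift (mat S i k) (mat S k j) div 2)"
  unfolding mutate_def mutation_shift_def by simp

lemma ex_mutate [simp]: "ex (mutate k S) = ex S"
  and fr_mutate [simp]: "fr (mutate k S) = fr S"
  and ext_mutate [simp]: "ext (mutate k S) = ext S"
  unfolding mutate_def ext_def by simp_all

lemma mutseq_Nil [simp]: "mutseq [] S = S"
  and mutseq_Cons [simp]: "mutseq (k # ks) S = mutseq ks (mutate k S)"
  and mutseq_append: "mutseq (ks @ ls) S = mutseq ls (mutseq ks S)"
  unfolding mutseq_def by simp_all

lemma ex_mutseq [simp]: "ex (mutseq ks S) = ex S"
  and fr_mutseq [simp]: "fr (mutseq ks S) = fr S"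
  and ext_mutseq [simp]: "ext (mutseq ks S) = ext S"
  by (induction ks arbitrary: S) (simp_all add: ext_def)

lemma even_mutation_shift: "even (mutation_shift a b)"
  unfolding mutation_shift_def by (cases "a \<ge> 0"; cases "b \<ge> 0") (auto simp: abs_if)

lemma skew_symmetrizable_diag:
  assumes "skew_symmetrizable E B" "k \<in> E"
  shows "B k k = 0"
proof -
  obtain d where "d k > 0" "d k * B k k = - (d k * B k k)"
    using assms unfolding skew_symmetrizable_def by blast
  then show ?thesis by simp
qed

lemma mutation_shift_skew:
  fixes di dj dk bik bki bkj bjk :: int
  assumes "di > 0" "dj > 0" "dk > 0"
    and ik: "di * bik = - (dk * bki)" and kj: "dk * bkj = - (dj * bjk)"
  shows "di * mutation_shift bik bkj = - (dj * mutation_shift bjk bki)"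
proof -
  have "\<bar>di * bik\<bar> = \<bar>dk * bki\<bar>" "\<bar>dk * bkj\<bar> = \<bar>dj * bjk\<bar>"
    unfolding ik kj by simp_all
  then have ik': "di * \<bar>bik\<bar> = dk * \<bar>bki\<bar>" and kj': "dk * \<bar>bkj\<bar> = dj * \<bar>bjk\<bar>"
    using assms(1-3) by (simp_all add: abs_mult)
  have "di * mutation_shift bik bkj = (di * \<bar>bik\<bar>) * bkj + (di * bik) * \<bar>bkj\<bar>"
    unfolding mutation_shift_def by (simp add: algebra_simps)
  also have "\<dots> = \<bar>bki\<bar> * (dk * bkj) - bki * (dk * \<bar>bkj\<bar>)"
    unfolding ik' ik by (simp add: algebra_simps)
  also have "\<dots> = - (dj * mutation_shift bjk bki)"
    unfolding kj' kj mutation_shift_def by (simp add: algebra_simps)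
  finally show ?thesis .
qed

lemma skew_symmetrizable_mutate:
  assumes skew: "skew_symmetrizable E (mat S)" and k: "k \<in> E"
  shows "skew_symmetrizable E (mat (mutate k S))"
proof -
  obtain d where pos: "\<forall>i\<in>E. d i > 0"
    and d: "\<And>i j. i \<in> E \<Longrightarrow> j \<in> E \<Longrightarrow> d i * mat S i j = - (d j * mat S j i)"
    using skew unfolding skew_symmetrizable_def by blast
  have "d i * mat (mutate k S) i j = - (d j * mat (mutate k S) j i)" if ij: "i \<in> E" "j \<in> E" for i j
  proof (cases "i = k \<or> j = k")
    case True
    then show ?thesis using d[OF ij] by (auto simp: mat_mutate)
  next
    case False
    obtain m1 where m1: "mutation_shift (mat S i k) (mat S k j) = 2 * m1"
      using even_mutation_shift by blast
    obtain m2 where m2: "mutation_shift (mat S j k) (mat S k i) = 2 * m2"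
      using even_mutation_shift by blast
    have "d i * (2 * m1) = - (d j * (2 * m2))"
      unfolding m1[symmetric] m2[symmetric]
      by (rule mutation_shift_skew[OF _ _ _ d[OF ij(1) k] d[OF k ij(2)]]) (use pos ij k in auto)
    then show ?thesis using False d[OF ij] m1 m2 by (simp add: mat_mutate algebra_simps)
  qed
  then show ?thesis unfolding skew_symmetrizable_def using pos by blast
qed

lemma exch_pos_eq_monomial: "finite (ext S) \<Longrightarrow> exch_pos S k = monomial (cl S) (ext S)
    (\<lambda>i. if i \<in> {i\<in>ext S. mat S i k > 0} then nat (mat S i k) else 0)"
  unfolding exch_pos_def by (rule prod_power_eq_monomial) auto

lemma exch_neg_eq_monomial: "finite (ext S) \<Longrightarrow> exch_neg S k = monomial (cl S) (ext S)
    (\<lambda>i. if i \<in> {i\<in>ext S. mat S i k < 0} then nat (- mat S i k) else 0)"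
  unfolding exch_neg_def by (rule prod_power_eq_monomial) auto

lemma valid_seed_finite: "valid_seed S \<Longrightarrow> finite (ext S)"
  and valid_seed_alg_indep: "valid_seed S \<Longrightarrow> alg_indep (cl S) (ext S)"
  and valid_seed_skew: "valid_seed S \<Longrightarrow> skew_symmetrizable (ex S) (mat S)"
  unfolding valid_seed_def ext_def by auto

lemma exch_sum_nonzero:
  assumes "valid_seed S"
  shows "exch_pos S k + exch_neg S k \<noteq> 0"
  unfolding exch_pos_eq_monomial[OF valid_seed_finite[OF assms]]
    exch_neg_eq_monomial[OF valid_seed_finite[OF assms]]
  by (rule alg_indep_monomial_add_nonzero[OF valid_seed_alg_indep[OF assms]])
    (auto simp: supported_on_def)

lemma exchange_relation:
  assumes "valid_seed S" "k \<in> ext S"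
  shows "cl (mutate k S) k * cl S k = exch_pos S k + exch_neg S k"
  using alg_indep_nonzero[OF valid_seed_alg_indep[OF assms(1)] valid_seed_finite[OF assms(1)] assms(2)]
  by (simp add: cl_mutate)

lemma valid_seed_mutate:
  assumes valid: "valid_seed S" and k: "k \<in> ex S"
  shows "valid_seed (mutate k S)"
proof -
  have fin: "finite (ext S)" and indep: "alg_indep (cl S) (ext S)"
    and skew: "skew_symmetrizable (ex S) (mat S)"
    using valid by (simp_all add: valid_seed_finite valid_seed_alg_indep valid_seed_skew)
  have kI: "k \<in> ext S" using k ex_subset_ext[of S] by auto
  have "mat S k k = 0" by (rule skew_symmetrizable_diag[OF skew k])
  then have "exch_pos S k + exch_neg S k \<in> qalg (cl S ` (ext S - {k}))"
    unfolding exch_pos_def exch_neg_def by (intro qalg.add qalg_prod qalg_power qalg.gen) auto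
  then have "alg_indep ((cl S)(k := (exch_pos S k + exch_neg S k) / cl S k)) (ext S)"
    by (rule alg_indep_exchange[OF indep fin kI _ exch_sum_nonzero[OF valid]])
      (simp add: alg_indep_nonzero[OF indep fin kI])
  then show ?thesis
    using valid skew_symmetrizable_mutate[OF skew k] unfolding valid_seed_def cl_mutate by simp
qed

lemma valid_seed_mutseq: "valid_seed S \<Longrightarrow> set ks \<subseteq> ex S \<Longrightarrow> valid_seed (mutseq ks S)"
  by (induction ks arbitrary: S) (auto simp: valid_seed_mutate)

lemma mutate_mutate:
  assumes valid: "valid_seed S" and k: "k \<in> ex S"
  shows "mutate k (mutate k S) = S"
proof (rule seed.equality)
  let ?S' = "mutate k S"
  have kk: "mat S k k = 0" by (rule skew_symmetrizable_diag[OF valid_seed_skew[OF valid] k])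
  have col: "mat ?S' i k = - mat S i k" for i by (simp add: mat_mutate)
  have "exch_pos ?S' k = exch_neg S k" "exch_neg ?S' k = exch_pos S k"
    unfolding exch_pos_def exch_neg_def col ext_mutate
    by (auto simp: cl_mutate kk intro!: prod.cong)
  moreover have "(exch_neg S k + exch_pos S k) / ((exch_pos S k + exch_neg S k) / cl S k) = cl S k"
    using exch_sum_nonzero[OF valid] by (cases "cl S k = 0") (simp_all add: add.commute)
  ultimately show "cl (mutate k ?S') = cl S"
    unfolding cl_mutate[of k ?S'] unfolding cl_mutate[of k S] by simp
  have shift: "mutation_shift (- a) (- b) div 2 = - (mutation_shift a b div 2)" for a b
  proof -
    obtain m where "mutation_shift a b = 2 * m" using even_mutation_shift by blast
    moreover have "mutation_shift (- a) (- b) = - mutation_shift a b"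
      unfolding mutation_shift_def by simp
    ultimately show ?thesis by simp
  qed
  show "mat (mutate k ?S') = mat S"
  proof (intro ext)
    fix i j
    show "mat (mutate k ?S') i j = mat S i j"
      using shift[of "mat S i k" "mat S k j"] by (simp add: mat_mutate[of k ?S'] mat_mutate[of k S])
  qed
qed (simp_all add: mutate_def)

lemma mutseq_rev_mutseq:
  "valid_seed S \<Longrightarrow> set ks \<subseteq> ex S \<Longrightarrow> mutseq (rev ks) (mutseq ks S) = S"
  by (induction ks arbitrary: S) (simp_all add: mutseq_append valid_seed_mutate mutate_mutate)

lemma mclass_self: "S \<in> mclass S"
  unfolding mclass_def by (auto intro: exI[of _ "[]"])

lemma mclass_ex: "T \<in> mclass S \<Longrightarrow> ex T = ex S"
  unfolding mclass_def by auto

lemma mclass_valid: "valid_seed S \<Longrightarrow> T \<in> mclass S \<Longrightarrow> valid_seed T"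
  unfolding mclass_def by (auto intro: valid_seed_mutseq)

lemma mclass_mutseq:
  assumes "T \<in> mclass S" "set ks \<subseteq> ex S"
  shows "mutseq ks T \<in> mclass S"
proof -
  obtain t where "T = mutseq t S" "set t \<subseteq> ex S" using assms(1) unfolding mclass_def by auto
  then show ?thesis
    using assms(2) unfolding mclass_def by (auto simp: mutseq_append intro!: exI[of _ "t @ ks"])
qed

lemma mclass_connected:
  assumes valid: "valid_seed S" and "T \<in> mclass S" "U \<in> mclass S"
  obtains m where "set m \<subseteq> ex S" "U = mutseq m T"
proof -
  obtain t u where "T = mutseq t S" "set t \<subseteq> ex S" "U = mutseq u S" "set u \<subseteq> ex S"
    using assms(2,3) unfolding mclass_def by auto
  then show ?thesis
    using mutseq_rev_mutseq[OF valid] by (intro that[of "rev t @ u"]) (auto simp: mutseq_append)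
qed

section \<open>Homomorphisms intertwining mutations\<close>

definition hom_on :: "('a::field_char_0 \<Rightarrow> 'a) \<Rightarrow> 'a set \<Rightarrow> bool" where
  "hom_on f A \<longleftrightarrow> (\<forall>x\<in>A. \<forall>y\<in>A. f (x + y) = f x + f y \<and> f (x * y) = f x * f y) \<and> f 1 = 1"

definition intertwines :: "('a::field_char_0 \<Rightarrow> 'a) \<Rightarrow> (nat \<Rightarrow> nat) \<Rightarrow> 'a seed \<Rightarrow> 'a seed \<Rightarrow> bool" where
  "intertwines f \<sigma> T T' \<longleftrightarrow> bij_betw \<sigma> (ext T) (ext T') \<and> \<sigma> ` ex T = ex T' \<and>
     (\<forall>ks. set ks \<subseteq> ex T \<longrightarrow>
        (\<forall>i\<in>ext T. f (cl (mutseq ks T) i) = cl (mutseq (map \<sigma> ks) T') (\<sigma> i)))"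

lemma cluster_iso_iff: "cluster_iso S1 S2 f \<longleftrightarrow>
    bij_betw f (cluster_alg S1) (cluster_alg S2) \<and> hom_on f (cluster_alg S1) \<and>
    (\<exists>T\<in>mclass S1. \<exists>T'\<in>mclass S2. \<exists>\<sigma>. intertwines f \<sigma> T T')"
  unfolding cluster_iso_def intertwines_def hom_on_def by blast

lemma hom_onD:
  assumes "hom_on f A"
  shows hom_on_one: "f 1 = 1"
    and hom_on_add: "x \<in> A \<Longrightarrow> y \<in> A \<Longrightarrow> f (x + y) = f x + f y"
    and hom_on_mult: "x \<in> A \<Longrightarrow> y \<in> A \<Longrightarrow> f (x * y) = f x * f y"
  using assms unfolding hom_on_def by simp_all

lemma hom_on_subset: "hom_on f A \<Longrightarrow> B \<subseteq> A \<Longrightarrow> hom_on f B"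
  unfolding hom_on_def by blast

lemma hom_on_power:
  assumes hom: "hom_on g (qalg X)" and a: "a \<in> qalg X"
  shows "g (a ^ n) = g a ^ n"
proof (induction n)
  case (Suc n)
  then show ?case using hom_on_mult[OF hom a qalg_power[OF a]] by simp
qed (simp add: hom_on_one[OF hom])

lemma hom_on_prod_power:
  assumes hom: "hom_on g (qalg X)" and a: "\<And>i. i \<in> F \<Longrightarrow> a i \<in> qalg X"
  shows "g (\<Prod>i\<in>F. a i ^ n i) = (\<Prod>i\<in>F. g (a i) ^ n i)"
  using a
proof (induction F rule: infinite_finite_induct)
  case (insert j F)
  have "(\<Prod>i\<in>F. a i ^ n i) \<in> qalg X" "a j ^ n j \<in> qalg X"
    using insert.prems by (auto intro!: qalg_prod qalg_power)
  then show ?case using insert hom_on_mult[OF hom] hom_on_power[OF hom] by simp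
qed (simp_all add: hom_on_one[OF hom])

lemma hom_on_of_rat:
  assumes hom: "hom_on g (qalg X)"
  shows "g (of_rat q) = of_rat q"
proof -
  have rat: "of_rat r \<in> qalg X" for r by (rule qalg.rat)
  then have int: "(of_int i :: 'a) \<in> qalg X" for i by (metis of_rat_of_int_eq)
  have add: "g (of_rat r + of_rat s) = g (of_rat r) + g (of_rat s)" for r s
    by (rule hom_on_add[OF hom rat rat])
  have zero: "g 0 = 0" using add[of 0 0] by simp
  have nat: "g (of_nat n) = of_nat n" for n
  proof (induction n)
    case (Suc n)
    have "(of_nat n :: 'a) \<in> qalg X" using rat[of "of_nat n"] by simp
    then show ?case using Suc hom_on_add[OF hom qalg_one] hom_on_one[OF hom] by simp
  qed (simp add: zero)
  have int_eq: "g (of_int i) = of_int i" for i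
  proof (cases "i \<ge> 0")
    case True
    then show ?thesis using nat[of "nat i"] by simp
  next
    case False
    have "g (of_int i) + g (of_int (- i)) = g 0"
      using hom_on_add[OF hom int int, of i "- i"] by simp
    then show ?thesis using zero nat[of "nat (- i)"] False by (simp add: add_eq_0_iff)
  qed
  obtain n d where nd: "quotient_of q = (n, d)" by (cases "quotient_of q")
  have d: "d > 0" using quotient_of_denom_pos[OF nd] .
  have q: "(of_rat q :: 'a) = of_int n / of_int d"
    using quotient_of_div[OF nd] by (simp add: of_rat_divide)
  have "g (of_rat q) * of_int d = of_int n"
    using hom_on_mult[OF hom rat int, of q d] q d int_eq by simp
  then have "g (of_rat q) = of_int n / of_int d" using d by (simp add: eq_divide_eq)
  then show ?thesis using q by simp
qed

lemma hom_on_image_qalg: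
  assumes hom: "hom_on g (qalg X)" and G: "G \<subseteq> qalg X"
  shows "g ` qalg G = qalg (g ` G)"
proof
  have sub: "qalg G \<subseteq> qalg X" by (rule qalg_subset_qalg[OF G])
  show "g ` qalg G \<subseteq> qalg (g ` G)"
  proof (rule image_subsetI)
    fix x assume "x \<in> qalg G"
    then show "g x \<in> qalg (g ` G)"
    proof (induction rule: qalg.induct)
      case (rat q)
      then show ?case using hom_on_of_rat[OF hom] by (simp add: qalg.rat)
    next
      case (add x y)
      then have "x \<in> qalg X" "y \<in> qalg X" using sub by auto
      then show ?case using add.IH hom_on_add[OF hom] by (simp add: qalg.add)
    next
      case (mult x y)
      then have "x \<in> qalg X" "y \<in> qalg X" using sub by auto
      then show ?case using mult.IH hom_on_mult[OF hom] by (simp add: qalg.mult)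
    qed (auto intro: qalg.gen)
  qed
  show "qalg (g ` G) \<subseteq> g ` qalg G"
  proof
    fix y assume "y \<in> qalg (g ` G)"
    then show "y \<in> g ` qalg G"
    proof (induction rule: qalg.induct)
      case (rat q)
      then show ?case using hom_on_of_rat[OF hom, of q] by (metis image_eqI qalg.rat)
    next
      case (add y1 y2)
      then obtain x1 x2 where "x1 \<in> qalg G" "x2 \<in> qalg G" "y1 = g x1" "y2 = g x2" by blast
      moreover have "x1 \<in> qalg X" "x2 \<in> qalg X" using calculation(1,2) sub by auto
      ultimately have "y1 + y2 = g (x1 + x2)" "x1 + x2 \<in> qalg G"
        using hom_on_add[OF hom, of x1 x2] by (auto intro: qalg.add)
      then show ?case by blast
    next
      case (mult y1 y2)
      then obtain x1 x2 where "x1 \<in> qalg G" "x2 \<in> qalg G" "y1 = g x1" "y2 = g x2" by blast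
      moreover have "x1 \<in> qalg X" "x2 \<in> qalg X" using calculation(1,2) sub by auto
      ultimately have "y1 * y2 = g (x1 * x2)" "x1 * x2 \<in> qalg G"
        using hom_on_mult[OF hom, of x1 x2] by (auto intro: qalg.mult)
      then show ?case by blast
    qed (auto intro: qalg.gen)
  qed
qed

lemma intertwines_mutseq:
  assumes "intertwines f \<sigma> T T'" "set m \<subseteq> ex T"
  shows "intertwines f \<sigma> (mutseq m T) (mutseq (map \<sigma> m) T')"
  using assms unfolding intertwines_def by (auto simp flip: mutseq_append)

lemma intertwines_comp:
  assumes f: "intertwines f \<sigma> T T'" and g: "intertwines g \<tau> T' T''"
  shows "intertwines (g \<circ> f) (\<tau> \<circ> \<sigma>) T T''"
  unfolding intertwines_def
proof (intro conjI allI impI ballI)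
  show "bij_betw (\<tau> \<circ> \<sigma>) (ext T) (ext T'')"
    using f g unfolding intertwines_def by (auto intro: bij_betw_trans)
  show "(\<tau> \<circ> \<sigma>) ` ex T = ex T''"
    using f g unfolding intertwines_def by (metis image_comp)
  fix ks i assume ks: "set ks \<subseteq> ex T" and i: "i \<in> ext T"
  have "set (map \<sigma> ks) \<subseteq> ex T'" "\<sigma> i \<in> ext T'"
    using f ks i unfolding intertwines_def by (auto dest: bij_betwE)
  then show "(g \<circ> f) (cl (mutseq ks T) i) = cl (mutseq (map (\<tau> \<circ> \<sigma>) ks) T'') ((\<tau> \<circ> \<sigma>) i)"
    using f g ks i unfolding intertwines_def by simp
qed

lemma intertwines_inverse:
  assumes tw: "intertwines f \<sigma> T T'" and inverse: "\<And>x. h (f x) = x"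
  shows "intertwines h (inv_into (ext T) \<sigma>) T' T"
  unfolding intertwines_def
proof (intro conjI allI impI ballI)
  let ?\<sigma>' = "inv_into (ext T) \<sigma>"
  have bij: "bij_betw \<sigma> (ext T) (ext T')" and ex: "\<sigma> ` ex T = ex T'"
    and comm: "\<And>ks i. set ks \<subseteq> ex T \<Longrightarrow> i \<in> ext T \<Longrightarrow>
       f (cl (mutseq ks T) i) = cl (mutseq (map \<sigma> ks) T') (\<sigma> i)"
    using tw unfolding intertwines_def by auto
  show bij': "bij_betw ?\<sigma>' (ext T') (ext T)" by (rule bij_betw_inv_into[OF bij])
  have \<sigma>\<sigma>': "\<sigma> (?\<sigma>' j) = j" if "j \<in> ext T'" for j
    using bij that by (simp add: bij_betw_def f_inv_into_f)
  have "?\<sigma>' ` ex T' = ?\<sigma>' ` \<sigma> ` ex T" using ex by simp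
  also have "\<dots> = ex T"
    using bij ex_subset_ext[of T] by (simp add: image_comp bij_betw_def inv_into_f_f subset_iff cong: image_cong)
  finally show ex': "?\<sigma>' ` ex T' = ex T" .
  fix ks' i' assume ks': "set ks' \<subseteq> ex T'" and i': "i' \<in> ext T'"
  have "map \<sigma> (map ?\<sigma>' ks') = ks'" using ks' ex_subset_ext[of T'] \<sigma>\<sigma>' by (induction ks') auto
  moreover have "set (map ?\<sigma>' ks') \<subseteq> ex T" "?\<sigma>' i' \<in> ext T"
    using ks' ex' i' bij' by (auto dest: bij_betwE)
  ultimately have "f (cl (mutseq (map ?\<sigma>' ks') T) (?\<sigma>' i')) = cl (mutseq ks' T') i'"
    using comm \<sigma>\<sigma>'[OF i'] by metis
  then show "h (cl (mutseq ks' T') i') = cl (mutseq (map ?\<sigma>' ks') T) (?\<sigma>' i')"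
    using inverse by metis
qed

section \<open>Cluster automorphisms and conjugation\<close>

lemma cl_in_cluster_alg: "T \<in> mclass S0 \<Longrightarrow> i \<in> ext T \<Longrightarrow> cl T i \<in> cluster_alg S0"
  unfolding cluster_alg_def cvars_def by (auto intro: qalg.gen)

lemma AutD:
  assumes "f \<in> Aut S0"
  shows Aut_bij: "bij_betw f (cluster_alg S0) (cluster_alg S0)"
    and Aut_hom: "hom_on f (cluster_alg S0)"
    and Aut_outside: "x \<notin> cluster_alg S0 \<Longrightarrow> f x = x"
    and Aut_intertwines: "\<exists>T\<in>mclass S0. \<exists>T'\<in>mclass S0. \<exists>\<sigma>. intertwines f \<sigma> T T'"
  using assms unfolding Aut_def cluster_iso_iff by auto

lemma AutI:
  assumes "bij_betw f (cluster_alg S0) (cluster_alg S0)" "hom_on f (cluster_alg S0)"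
    "\<And>x. x \<notin> cluster_alg S0 \<Longrightarrow> f x = x"
    "T \<in> mclass S0" "T' \<in> mclass S0" "intertwines f \<sigma> T T'"
  shows "f \<in> Aut S0"
  using assms unfolding Aut_def cluster_iso_iff by blast

lemma Aut_in_cluster_alg: "f \<in> Aut S0 \<Longrightarrow> x \<in> cluster_alg S0 \<Longrightarrow> f x \<in> cluster_alg S0"
  using Aut_bij bij_betwE by blast

text \<open>The definition of \<open>Aut\<close> provides intertwining at a single seed only; since mutation is
  an involution, the mutation class is connected and the intertwining can be moved to any seed.\<close>
lemma Aut_intertwines_at:
  assumes valid: "valid_seed S0" and f: "f \<in> Aut S0" and U: "U \<in> mclass S0"
  obtains U' \<sigma> where "U' \<in> mclass S0" "intertwines f \<sigma> U U'"
proof -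
  obtain T T' \<sigma> where T: "T \<in> mclass S0" and T': "T' \<in> mclass S0" and tw: "intertwines f \<sigma> T T'"
    using Aut_intertwines[OF f] by blast
  obtain m where m: "set m \<subseteq> ex S0" "U = mutseq m T"
    using mclass_connected[OF valid T U] by blast
  have "\<sigma> ` ex T = ex T'" using tw unfolding intertwines_def by simp
  then have "set (map \<sigma> m) \<subseteq> ex S0" using m(1) mclass_ex[OF T] mclass_ex[OF T'] by auto
  moreover have "intertwines f \<sigma> U (mutseq (map \<sigma> m) T')"
    using intertwines_mutseq[OF tw] m mclass_ex[OF T] by simp
  ultimately show ?thesis using that mclass_mutseq[OF T'] by blast
qed

lemma Aut_comp:
  assumes valid: "valid_seed S0" and f: "f \<in> Aut S0" and g: "g \<in> Aut S0"
  shows "g \<circ> f \<in> Aut S0"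
proof -
  let ?A = "cluster_alg S0"
  obtain T T' \<sigma> where T: "T \<in> mclass S0" and T': "T' \<in> mclass S0" and tw_f: "intertwines f \<sigma> T T'"
    using Aut_intertwines[OF f] by blast
  obtain T'' \<tau> where T'': "T'' \<in> mclass S0" and tw_g: "intertwines g \<tau> T' T''"
    using Aut_intertwines_at[OF valid g T'] by blast
  have "hom_on (g \<circ> f) ?A"
    using Aut_hom[OF f] Aut_hom[OF g] Aut_in_cluster_alg[OF f]
    unfolding hom_on_def cluster_alg_def by (simp add: qalg.add qalg.mult)
  moreover have "bij_betw (g \<circ> f) ?A ?A" by (rule bij_betw_trans[OF Aut_bij[OF f] Aut_bij[OF g]])
  ultimately show ?thesis
    using intertwines_comp[OF tw_f tw_g] T T'' Aut_outside[OF f] Aut_outside[OF g] by (intro AutI) auto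
qed

lemma aut_inv_left:
  assumes f: "f \<in> Aut S0"
  shows "aut_inv S0 f (f x) = x"
proof (cases "x \<in> cluster_alg S0")
  case True
  then show ?thesis using Aut_bij[OF f] Aut_in_cluster_alg[OF f]
    by (simp add: aut_inv_def bij_betw_def inv_into_f_f)
qed (simp add: aut_inv_def Aut_outside[OF f])

lemma aut_inv_right:
  assumes f: "f \<in> Aut S0"
  shows "f (aut_inv S0 f x) = x"
proof (cases "x \<in> cluster_alg S0")
  case True
  then show ?thesis using Aut_bij[OF f] by (simp add: aut_inv_def bij_betw_def f_inv_into_f)
qed (simp add: aut_inv_def Aut_outside[OF f])

lemma aut_inv_in_cluster_alg:
  "f \<in> Aut S0 \<Longrightarrow> x \<in> cluster_alg S0 \<Longrightarrow> aut_inv S0 f x \<in> cluster_alg S0"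
  using Aut_bij by (force simp: aut_inv_def bij_betw_def inv_into_into)

lemma Aut_aut_inv:
  assumes f: "f \<in> Aut S0"
  shows "aut_inv S0 f \<in> Aut S0"
proof -
  let ?A = "cluster_alg S0" and ?h = "aut_inv S0 f"
  obtain T T' \<sigma> where T: "T \<in> mclass S0" and T': "T' \<in> mclass S0" and tw: "intertwines f \<sigma> T T'"
    using Aut_intertwines[OF f] by blast
  have "bij_betw (inv_into ?A f) ?A ?A" by (rule bij_betw_inv_into[OF Aut_bij[OF f]])
  then have "bij_betw ?h ?A ?A" by (rule bij_betw_cong[THEN iffD1, rotated]) (simp add: aut_inv_def)
  moreover have "hom_on ?h ?A"
  proof -
    have "?h (x + y) = ?h x + ?h y \<and> ?h (x * y) = ?h x * ?h y" if "x \<in> ?A" "y \<in> ?A" for x y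
    proof -
      have "?h x \<in> ?A" "?h y \<in> ?A" using that by (simp_all add: aut_inv_in_cluster_alg[OF f])
      then have "f (?h x + ?h y) = x + y" "f (?h x * ?h y) = x * y"
        using hom_on_add[OF Aut_hom[OF f]] hom_on_mult[OF Aut_hom[OF f]] aut_inv_right[OF f]
        by simp_all
      then show ?thesis by (metis aut_inv_left[OF f])
    qed
    moreover have "?h 1 = 1" by (metis aut_inv_left[OF f] hom_on_one[OF Aut_hom[OF f]])
    ultimately show ?thesis unfolding hom_on_def by blast
  qed
  moreover have "x \<notin> ?A \<Longrightarrow> ?h x = x" for x unfolding aut_inv_def by simp
  ultimately show ?thesis
    using intertwines_inverse[OF tw aut_inv_left[OF f]] T T' by (intro AutI)
qed

lemma aut_inv_aut_inv:
  assumes f: "f \<in> Aut S0"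
  shows "aut_inv S0 (aut_inv S0 f) = f"
proof
  fix x
  have "aut_inv S0 (aut_inv S0 f) x = aut_inv S0 (aut_inv S0 f) (aut_inv S0 f (f x))"
    by (simp add: aut_inv_left[OF f])
  then show "aut_inv S0 (aut_inv S0 f) x = f x" by (simp add: aut_inv_left[OF Aut_aut_inv[OF f]])
qed

definition conj_aut :: "('a::field_char_0) seed \<Rightarrow> ('a \<Rightarrow> 'a) \<Rightarrow> ('a \<Rightarrow> 'a) \<Rightarrow> ('a \<Rightarrow> 'a)" where
  "conj_aut S0 g h = g \<circ> h \<circ> aut_inv S0 g"

lemma conjugate_iff_conj_aut: "conjugate S0 H1 H2 \<longleftrightarrow> (\<exists>g\<in>Aut S0. H2 = conj_aut S0 g ` H1)"
  unfolding conjugate_def conj_aut_def ..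

lemma conj_aut_in_Aut:
  "valid_seed S0 \<Longrightarrow> g \<in> Aut S0 \<Longrightarrow> h \<in> Aut S0 \<Longrightarrow> conj_aut S0 g h \<in> Aut S0"
  unfolding conj_aut_def by (intro Aut_comp Aut_aut_inv)

lemma conj_aut_apply: "g \<in> Aut S0 \<Longrightarrow> conj_aut S0 g h (g x) = g (h x)"
  unfolding conj_aut_def by (simp add: aut_inv_left)

lemma conj_aut_aut_inv:
  assumes "g \<in> Aut S0"
  shows "conj_aut S0 (aut_inv S0 g) (conj_aut S0 g h) = h"
  unfolding conj_aut_def aut_inv_aut_inv[OF assms] by (simp add: fun_eq_iff aut_inv_left[OF assms])

lemma Gal_image:
  assumes valid: "valid_seed S0" and g: "g \<in> Aut S0"
  shows "Gal S0 (g ` B) = conj_aut S0 g ` Gal S0 B"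
proof
  show "conj_aut S0 g ` Gal S0 B \<subseteq> Gal S0 (g ` B)"
    unfolding Gal_def using conj_aut_in_Aut[OF valid g] conj_aut_apply[OF g] by auto
  show "Gal S0 (g ` B) \<subseteq> conj_aut S0 g ` Gal S0 B"
  proof
    fix h assume h: "h \<in> Gal S0 (g ` B)"
    let ?h' = "conj_aut S0 (aut_inv S0 g) h"
    have "?h' b = b" if "b \<in> B" for b
      using h that unfolding Gal_def conj_aut_def aut_inv_aut_inv[OF g] by (auto simp: aut_inv_left[OF g])
    then have "?h' \<in> Gal S0 B"
      using h conj_aut_in_Aut[OF valid Aut_aut_inv[OF g]] unfolding Gal_def by auto
    moreover have "conj_aut S0 g ?h' = h"
      using conj_aut_aut_inv[OF Aut_aut_inv[OF g], of h] by (simp add: aut_inv_aut_inv[OF g])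
    ultimately show "h \<in> conj_aut S0 g ` Gal S0 B" by (metis image_eqI)
  qed
qed

lemma fixalg_conj_aut:
  assumes g: "g \<in> Aut S0"
  shows "fixalg S0 (conj_aut S0 g ` H) = g ` fixalg S0 H"
proof
  show "g ` fixalg S0 H \<subseteq> fixalg S0 (conj_aut S0 g ` H)"
    unfolding fixalg_def using conj_aut_apply[OF g] Aut_in_cluster_alg[OF g] by auto
  show "fixalg S0 (conj_aut S0 g ` H) \<subseteq> g ` fixalg S0 H"
  proof
    fix z assume z: "z \<in> fixalg S0 (conj_aut S0 g ` H)"
    let ?w = "aut_inv S0 g z"
    have "h ?w = ?w" if "h \<in> H" for h
      using z that conj_aut_apply[OF g, of h ?w] unfolding fixalg_def aut_inv_right[OF g]
      by (metis (mono_tags, lifting) aut_inv_left[OF g] image_eqI mem_Collect_eq)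
    then have "?w \<in> fixalg S0 H"
      using z aut_inv_in_cluster_alg[OF g] unfolding fixalg_def by auto
    then show "z \<in> g ` fixalg S0 H" using aut_inv_right[OF g, of z] by (metis image_eqI)
  qed
qed

section \<open>Transport of cluster subalgebras\<close>

lemma hom_on_prod_power_reindex:
  assumes hom: "hom_on g (qalg X)" and inj: "inj_on \<sigma> I" and A: "A \<subseteq> I"
    and x: "\<And>i. i \<in> I \<Longrightarrow> x i \<in> qalg X" "\<And>i. i \<in> I \<Longrightarrow> g (x i) = y (\<sigma> i)"
    and J: "finite J" "\<sigma> ` I \<subseteq> J"
  shows "g (\<Prod>i\<in>A. x i ^ n i) = monomial y J (\<lambda>j. if j \<in> \<sigma> ` A then n (inv_into I \<sigma> j) else 0)"
proof -
  have "g (\<Prod>i\<in>A. x i ^ n i) = (\<Prod>i\<in>A. y (\<sigma> i) ^ n i)"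
    by (subst hom_on_prod_power[OF hom]) (use A x in \<open>auto intro!: prod.cong\<close>)
  also have "\<dots> = (\<Prod>j\<in>\<sigma> ` A. y j ^ n (inv_into I \<sigma> j))"
    using inj A by (subst prod.reindex) (auto intro: inj_on_subset intro!: prod.cong simp: inv_into_f_f)
  also have "\<dots> = monomial y J (\<lambda>j. if j \<in> \<sigma> ` A then n (inv_into I \<sigma> j) else 0)"
    by (rule prod_power_eq_monomial) (use A J in auto)
  finally show ?thesis .
qed

lemma Aut_exchange_binomial:
  assumes valid: "valid_seed S0" and g: "g \<in> Aut S0"
    and S: "S \<in> mclass S0" and S': "S' \<in> mclass S0" and tw: "intertwines g \<sigma> S S'"
    and b: "b \<in> ex S"
  shows "g (exch_pos S b) + g (exch_neg S b) = exch_pos S' (\<sigma> b) + exch_neg S' (\<sigma> b)"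
proof -
  have comm: "\<And>ks i. set ks \<subseteq> ex S \<Longrightarrow> i \<in> ext S \<Longrightarrow>
       g (cl (mutseq ks S) i) = cl (mutseq (map \<sigma> ks) S') (\<sigma> i)"
    using tw unfolding intertwines_def by auto
  have bI: "b \<in> ext S" using b ex_subset_ext[of S] by auto
  have \<sigma>b: "\<sigma> b \<in> ext S'" using tw bI unfolding intertwines_def by (auto dest: bij_betwE)
  have xA: "cl S i \<in> cluster_alg S0" if "i \<in> ext S" for i using cl_in_cluster_alg[OF S that] .
  have mutA: "cl (mutate b S) b \<in> cluster_alg S0"
    using cl_in_cluster_alg[OF mclass_mutseq[OF S, of "[b]"]] b bI mclass_ex[OF S] by simp
  have exchA: "exch_pos S b \<in> cluster_alg S0" "exch_neg S b \<in> cluster_alg S0"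
    using xA unfolding exch_pos_def exch_neg_def cluster_alg_def by (auto intro!: qalg_prod qalg_power)
  have "g (exch_pos S b) + g (exch_neg S b) = g (cl (mutate b S) b * cl S b)"
    using hom_on_add[OF Aut_hom[OF g] exchA] exchange_relation[OF mclass_valid[OF valid S] bI]
    by simp
  also have "\<dots> = exch_pos S' (\<sigma> b) + exch_neg S' (\<sigma> b)"
    using hom_on_mult[OF Aut_hom[OF g] mutA xA[OF bI]] comm[of "[b]" b] comm[of "[]" b] b bI
      exchange_relation[OF mclass_valid[OF valid S'] \<sigma>b] by simp
  finally show ?thesis .
qed

text \<open>Transport both binomials to monomials in the variables of \<open>S'\<close>; by algebraic
  independence they must match the two monomials of the exchange binomial of \<open>S'\<close> at \<open>\<sigma> b\<close>,
  and \<open>x a\<close> occurs in neither of the transported ones.\<close>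
lemma intertwines_mat_eq_0:
  assumes valid: "valid_seed S0" and g: "g \<in> Aut S0"
    and S: "S \<in> mclass S0" and S': "S' \<in> mclass S0" and tw: "intertwines g \<sigma> S S'"
    and a: "a \<in> ext S" and b: "b \<in> ex S" and zero: "mat S a b = 0"
  shows "mat S' (\<sigma> a) (\<sigma> b) = 0"
proof -
  let ?x' = "cl S'" and ?I' = "ext S'"
  have bij: "bij_betw \<sigma> (ext S) ?I'" and comm: "\<And>i. i \<in> ext S \<Longrightarrow> g (cl S i) = ?x' (\<sigma> i)"
    using tw unfolding intertwines_def by (auto dest: spec[of _ "[]"])
  have inj: "inj_on \<sigma> (ext S)" using bij by (simp add: bij_betw_def)
  have \<sigma>a: "\<sigma> a \<in> ?I'" using bij a by (auto dest: bij_betwE)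
  have fin: "finite ?I'" using mclass_valid[OF valid S'] by (simp add: valid_seed_finite)
  define P where "P = {i\<in>ext S. mat S i b > 0}"
  define Q where "Q = {i\<in>ext S. mat S i b < 0}"
  define p where "p = (\<lambda>j. if j \<in> \<sigma> ` P then nat (mat S (inv_into (ext S) \<sigma> j) b) else 0)"
  define q where "q = (\<lambda>j. if j \<in> \<sigma> ` Q then nat (- mat S (inv_into (ext S) \<sigma> j) b) else 0)"
  define p' where "p' = (\<lambda>i. if i \<in> {i\<in>?I'. mat S' i (\<sigma> b) > 0} then nat (mat S' i (\<sigma> b)) else 0)"
  define q' where "q' = (\<lambda>i. if i \<in> {i\<in>?I'. mat S' i (\<sigma> b) < 0} then nat (- mat S' i (\<sigma> b)) else 0)"
  have "g (exch_pos S b) = monomial ?x' ?I' p" "g (exch_neg S b) = monomial ?x' ?I' q"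
    unfolding exch_pos_def exch_neg_def p_def q_def P_def Q_def
    by (rule hom_on_prod_power_reindex[OF Aut_hom[OF g, unfolded cluster_alg_def] inj];
        use cl_in_cluster_alg[OF S] comm fin bij in \<open>auto simp: cluster_alg_def bij_betw_def\<close>)+
  then have "monomial ?x' ?I' p + monomial ?x' ?I' q = monomial ?x' ?I' p' + monomial ?x' ?I' q'"
    using Aut_exchange_binomial[OF valid g S S' tw b]
    unfolding exch_pos_eq_monomial[OF fin] exch_neg_eq_monomial[OF fin] p'_def q'_def by simp
  then have "(p = p' \<and> q = q') \<or> (p = q' \<and> q = p')"
    by (rule alg_indep_monomial_add_eq[OF valid_seed_alg_indep[OF mclass_valid[OF valid S']], rotated -1])
      (use bij in \<open>auto simp: p_def q_def p'_def q'_def P_def Q_def supported_on_def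
         dest: bij_betwE\<close>)
  moreover have "\<sigma> a \<notin> \<sigma> ` P" "\<sigma> a \<notin> \<sigma> ` Q"
    using inj_on_image_mem_iff[OF inj a] zero unfolding P_def Q_def by auto
  ultimately have "p' (\<sigma> a) = 0" "q' (\<sigma> a) = 0" unfolding p_def q_def by auto
  then show ?thesis using \<sigma>a unfolding p'_def q'_def by (auto split: if_splits)
qed

lemma subseed_simps [simp]:
  "cl (subseed S I0 I1) = cl S" "mat (subseed S I0 I1) = mat S"
  "ex (subseed S I0 I1) = ex S - (I0 \<union> I1)" "fr (subseed S I0 I1) = (fr S \<union> I0) - I1"
  unfolding subseed_def by simp_all

lemma ext_subseed: "I0 \<subseteq> ex S \<Longrightarrow> ext (subseed S I0 I1) = ext S - I1"
  unfolding ext_def by auto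

lemma mutate_subseed:
  assumes I0: "I0 \<subseteq> ex S" and k: "k \<in> ex S - (I0 \<union> I1)" and zero: "\<forall>x\<in>I1. mat S x k = 0"
  shows "mutate k (subseed S I0 I1) = subseed (mutate k S) I0 I1"
proof (rule seed.equality)
  have "exch_pos (subseed S I0 I1) k = exch_pos S k" "exch_neg (subseed S I0 I1) k = exch_neg S k"
    unfolding exch_pos_def exch_neg_def ext_subseed[OF I0] subseed_simps
    using zero by (auto intro!: prod.cong)
  then show "cl (mutate k (subseed S I0 I1)) = cl (subseed (mutate k S) I0 I1)"
    by (simp add: cl_mutate)
qed (simp_all add: mutate_def subseed_def fun_eq_iff)

text \<open>The vanishing condition on the rows of \<open>I1\<close> is preserved by these mutations, which keeps
  the induction going.\<close>
lemma mutseq_subseed: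
  assumes "I0 \<subseteq> ex S" "set ks \<subseteq> ex S - (I0 \<union> I1)"
    and "\<forall>x\<in>I1. \<forall>y\<in>ex S - (I0 \<union> I1). mat S x y = 0"
  shows "mutseq ks (subseed S I0 I1) = subseed (mutseq ks S) I0 I1"
  using assms
proof (induction ks arbitrary: S)
  case (Cons k ks)
  have k: "k \<in> ex S - (I0 \<union> I1)" using Cons.prems(2) by simp
  have "x \<noteq> k" if "x \<in> I1" for x using that k by auto
  then have "\<forall>x\<in>I1. \<forall>y\<in>ex S - (I0 \<union> I1). mat (mutate k S) x y = 0"
    using Cons.prems(3) k by (simp add: mat_mutate mutation_shift_def)
  then show ?case
    using Cons.IH[of "mutate k S"] Cons.prems mutate_subseed[OF Cons.prems(1) k] k by simp
qed simp

lemma intertwines_image_ex_diff: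
  assumes tw: "intertwines g \<sigma> S S'" and I: "I \<subseteq> ext S"
  shows "\<sigma> ` (ex S - I) = ex S' - \<sigma> ` I"
proof -
  have "inj_on \<sigma> (ext S)" "\<sigma> ` ex S = ex S'" using tw unfolding intertwines_def bij_betw_def by auto
  then show ?thesis using inj_on_image_set_diff[of \<sigma> "ext S" "ex S" I] I ex_subset_ext[of S] by auto
qed

lemma intertwines_subseed:
  assumes tw: "intertwines g \<sigma> S S'" and I0: "I0 \<subseteq> ex S" and I1: "I1 \<subseteq> ext S"
    and zero: "\<forall>x\<in>I1. \<forall>y\<in>ex S - (I0 \<union> I1). mat S x y = 0"
    and zero': "\<forall>x\<in>\<sigma> ` I1. \<forall>y\<in>ex S' - (\<sigma> ` I0 \<union> \<sigma> ` I1). mat S' x y = 0"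
  shows "intertwines g \<sigma> (subseed S I0 I1) (subseed S' (\<sigma> ` I0) (\<sigma> ` I1))"
  unfolding intertwines_def
proof (intro conjI allI impI ballI)
  have bij: "bij_betw \<sigma> (ext S) (ext S')" and ex: "\<sigma> ` ex S = ex S'"
    and comm: "\<And>ks i. set ks \<subseteq> ex S \<Longrightarrow> i \<in> ext S \<Longrightarrow>
       g (cl (mutseq ks S) i) = cl (mutseq (map \<sigma> ks) S') (\<sigma> i)"
    using tw unfolding intertwines_def by auto
  have inj: "inj_on \<sigma> (ext S)" using bij by (simp add: bij_betw_def)
  have I0': "\<sigma> ` I0 \<subseteq> ex S'" using ex I0 by auto
  show ex_sub: "\<sigma> ` ex (subseed S I0 I1) = ex (subseed S' (\<sigma> ` I0) (\<sigma> ` I1))"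
    using intertwines_image_ex_diff[OF tw, of "I0 \<union> I1"] I0 I1 ex_subset_ext[of S] by (simp add: image_Un)
  show "bij_betw \<sigma> (ext (subseed S I0 I1)) (ext (subseed S' (\<sigma> ` I0) (\<sigma> ` I1)))"
    unfolding ext_subseed[OF I0] ext_subseed[OF I0'] bij_betw_def
    using inj_on_image_set_diff[OF inj Diff_subset I1] bij inj_on_diff[OF inj]
    by (simp add: bij_betw_def)
  fix ks i assume ks: "set ks \<subseteq> ex (subseed S I0 I1)" and i: "i \<in> ext (subseed S I0 I1)"
  have "set (map \<sigma> ks) \<subseteq> ex (subseed S' (\<sigma> ` I0) (\<sigma> ` I1))" using ks ex_sub by auto
  moreover have "g (cl (mutseq ks S) i) = cl (mutseq (map \<sigma> ks) S') (\<sigma> i)"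
    using ks i ext_subseed[OF I0] by (intro comm) auto
  ultimately show "g (cl (mutseq ks (subseed S I0 I1)) i) =
      cl (mutseq (map \<sigma> ks) (subseed S' (\<sigma> ` I0) (\<sigma> ` I1))) (\<sigma> i)"
    using ks mutseq_subseed[OF I0 _ zero] mutseq_subseed[OF I0' _ zero'] by simp
qed

lemma cvars_eq_Union: "cvars T = (\<Union>ks\<in>{ks. set ks \<subseteq> ex T}. cl (mutseq ks T) ` ext T)"
  unfolding cvars_def mclass_def by force

lemma image_cvars_intertwines:
  assumes tw: "intertwines g \<sigma> T T'"
  shows "g ` cvars T = cvars T'"
proof -
  have bij: "bij_betw \<sigma> (ext T) (ext T')" and ex: "\<sigma> ` ex T = ex T'"
    and comm: "\<And>ks i. set ks \<subseteq> ex T \<Longrightarrow> i \<in> ext T \<Longrightarrow>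
       g (cl (mutseq ks T) i) = cl (mutseq (map \<sigma> ks) T') (\<sigma> i)"
    using tw unfolding intertwines_def by auto
  have "{ks'. set ks' \<subseteq> ex T'} = map \<sigma> ` {ks. set ks \<subseteq> ex T}"
    using lists_image[of \<sigma> "ex T"] unfolding ex lists_eq_set .
  then have "cvars T' = (\<Union>ks\<in>{ks. set ks \<subseteq> ex T}. cl (mutseq (map \<sigma> ks) T') ` \<sigma> ` ext T)"
    unfolding cvars_eq_Union bij_betw_imp_surj_on[OF bij] by simp
  also have "\<dots> = g ` cvars T"
    unfolding cvars_eq_Union image_UN image_image using comm by auto
  finally show ?thesis ..
qed

lemma cluster_subseed_image:
  assumes valid: "valid_seed S0" and g: "g \<in> Aut S0" and sub: "cluster_subseed S0 S1"
  obtains S2 where "cluster_subseed S0 S2" "cluster_alg S2 = g ` cluster_alg S1" "cluster_iso S1 S2 g"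
proof -
  let ?A = "cluster_alg S0"
  obtain S I0 I1 where S: "S \<in> mclass S0" and I0: "I0 \<subseteq> ex S" and I1: "I1 \<subseteq> ext S"
    and disj: "I0 \<inter> I1 = {}" and S1: "S1 = subseed S I0 I1"
    and zero: "\<forall>x\<in>I1. \<forall>y\<in>ex S - (I0 \<union> I1). mat S x y = 0" and A1: "cluster_alg S1 \<subseteq> ?A"
    using sub unfolding cluster_subseed_def by auto
  obtain S' \<sigma> where S': "S' \<in> mclass S0" and tw: "intertwines g \<sigma> S S'"
    using Aut_intertwines_at[OF valid g S] by blast
  have bij: "bij_betw \<sigma> (ext S) (ext S')" and ex: "\<sigma> ` ex S = ex S'"
    using tw unfolding intertwines_def by auto
  have I0': "\<sigma> ` I0 \<subseteq> ex S'" using I0 ex by auto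
  have I1': "\<sigma> ` I1 \<subseteq> ext S'" using I1 bij by (auto dest: bij_betwE)
  have disj': "\<sigma> ` I0 \<inter> \<sigma> ` I1 = {}"
    using inj_on_image_Int[of \<sigma> "ext S" I0 I1] bij disj I0 I1 ex_subset_ext[of S] by (auto simp: bij_betw_def)
  have ex_diff: "\<sigma> ` (ex S - (I0 \<union> I1)) = ex S' - (\<sigma> ` I0 \<union> \<sigma> ` I1)"
    using intertwines_image_ex_diff[OF tw, of "I0 \<union> I1"] I0 I1 ex_subset_ext[of S] by (simp add: image_Un)
  have "mat S' (\<sigma> a) (\<sigma> b) = 0" if "a \<in> I1" "b \<in> ex S - (I0 \<union> I1)" for a b
    by (rule intertwines_mat_eq_0[OF valid g S S' tw]) (use that I1 zero in auto)
  then have zero': "\<forall>x\<in>\<sigma> ` I1. \<forall>y\<in>ex S' - (\<sigma> ` I0 \<union> \<sigma> ` I1). mat S' x y = 0"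
    unfolding ex_diff[symmetric] by blast
  define S2 where "S2 = subseed S' (\<sigma> ` I0) (\<sigma> ` I1)"
  have tw12: "intertwines g \<sigma> S1 S2"
    unfolding S1 S2_def by (rule intertwines_subseed[OF tw I0 I1 zero zero'])
  have "cvars S1 \<subseteq> qalg (cvars S0)" using A1 unfolding cluster_alg_def by (auto intro: qalg.gen)
  then have A2: "cluster_alg S2 = g ` cluster_alg S1"
    using hom_on_image_qalg[OF Aut_hom[OF g, unfolded cluster_alg_def]]
    unfolding cluster_alg_def image_cvars_intertwines[OF tw12, symmetric] by simp
  then have "cluster_alg S2 \<subseteq> ?A" using A1 Aut_in_cluster_alg[OF g] by auto
  then have "cluster_subseed S0 S2"
    unfolding cluster_subseed_def S2_def using I0' I1' disj' zero'
    by (intro bexI[OF _ S'] exI[of _ "\<sigma> ` I0"] exI[of _ "\<sigma> ` I1"]) auto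
  moreover have "bij_betw g (cluster_alg S1) (cluster_alg S2)"
    using A2 inj_on_subset[OF bij_betw_imp_inj_on[OF Aut_bij[OF g]] A1] by (simp add: bij_betw_def)
  then have "cluster_iso S1 S2 g"
    unfolding cluster_iso_iff using hom_on_subset[OF Aut_hom[OF g] A1] tw12 mclass_self by blast
  ultimately show ?thesis using A2 that by blast
qed

lemma cluster_subalgs_image:
  assumes "valid_seed S0" "g \<in> Aut S0" "B \<in> cluster_subalgs S0"
  shows "g ` B \<in> cluster_subalgs S0"
proof -
  obtain S1 where "cluster_subseed S0 S1" "B = cluster_alg S1"
    using assms(3) unfolding cluster_subalgs_def by blast
  then obtain S2 where "cluster_subseed S0 S2" "cluster_alg S2 = g ` B"
    using cluster_subseed_image[OF assms(1,2)] by metis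
  then show ?thesis unfolding cluster_subalgs_def by blast
qed

lemma M_sub_conj_aut:
  assumes valid: "valid_seed S0" and g: "g \<in> Aut S0" and B: "B \<in> M_sub S0 H"
  shows "g ` B \<in> M_sub S0 (conj_aut S0 g ` H)"
proof -
  let ?ginv = "aut_inv S0 g"
  have ginv_g: "?ginv ` g ` X = X" and g_ginv: "g ` ?ginv ` X = X" for X
    by (simp_all add: image_comp comp_def aut_inv_left[OF g] aut_inv_right[OF g])
  have sub: "B \<in> cluster_subalgs S0" and fixed: "B \<subseteq> fixalg S0 H" and Gal: "Gal S0 B = H"
    and max: "\<And>C. C \<in> cluster_subalgs S0 \<Longrightarrow> C \<subseteq> fixalg S0 H \<Longrightarrow> B \<subseteq> C \<Longrightarrow> C = B"
    using B unfolding M_sub_def by auto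
  have "C = g ` B"
    if C: "C \<in> cluster_subalgs S0" "C \<subseteq> fixalg S0 (conj_aut S0 g ` H)" "g ` B \<subseteq> C" for C
  proof -
    have "?ginv ` C = B"
    proof (rule max)
      show "?ginv ` C \<in> cluster_subalgs S0"
        by (rule cluster_subalgs_image[OF valid Aut_aut_inv[OF g] C(1)])
      show "?ginv ` C \<subseteq> fixalg S0 H" "B \<subseteq> ?ginv ` C"
        using image_mono[OF C(2), of ?ginv] image_mono[OF C(3), of ?ginv]
        unfolding fixalg_conj_aut[OF g] ginv_g by simp_all
    qed
    then show ?thesis using g_ginv by metis
  qed
  then show ?thesis
    unfolding M_sub_def using cluster_subalgs_image[OF valid g sub] fixed Gal
    by (simp add: fixalg_conj_aut[OF g] Gal_image[OF valid g] image_mono)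
qed

theorem theoremA:
  fixes S0 :: "('a::field_char_0) seed"
    and H1 H2 :: "('a \<Rightarrow> 'a) set"
  assumes "valid_seed S0"
    and "aut_subgroup S0 H1" and "aut_subgroup S0 H2"
    and "M_sub S0 H1 \<noteq> {}" and "M_sub S0 H2 \<noteq> {}"
  shows "conjugate S0 H1 H2 \<longleftrightarrow>
    (\<exists>f\<in>Aut S0. \<exists>S1 S2. cluster_subseed S0 S1 \<and> cluster_subseed S0 S2 \<and>
       cluster_alg S1 \<in> M_sub S0 H1 \<and> cluster_alg S2 \<in> M_sub S0 H2 \<and>
       f ` cluster_alg S1 = cluster_alg S2 \<and> cluster_iso S1 S2 f)"
    (is "_ \<longleftrightarrow> (\<exists>f\<in>Aut S0. \<exists>S1 S2. ?P f S1 S2)")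
proof
  assume "conjugate S0 H1 H2"
  then obtain g where g: "g \<in> Aut S0" and H2: "H2 = conj_aut S0 g ` H1"
    unfolding conjugate_iff_conj_aut by blast
  obtain B1 where B1: "B1 \<in> M_sub S0 H1" using assms(4) by blast
  then obtain S1 where S1: "cluster_subseed S0 S1" "cluster_alg S1 \<in> M_sub S0 H1"
    unfolding M_sub_def cluster_subalgs_def by auto
  obtain S2 where S2: "cluster_subseed S0 S2" "cluster_alg S2 = g ` cluster_alg S1" "cluster_iso S1 S2 g"
    using cluster_subseed_image[OF assms(1) g S1(1)] by blast
  have "cluster_alg S2 \<in> M_sub S0 H2"
    unfolding H2 S2(2) by (rule M_sub_conj_aut[OF assms(1) g S1(2)])
  then show "\<exists>f\<in>Aut S0. \<exists>S1 S2. ?P f S1 S2" using g S1 S2 by metis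
next
  assume "\<exists>f\<in>Aut S0. \<exists>S1 S2. ?P f S1 S2"
  then obtain f S1 S2 where f: "f \<in> Aut S0" and M: "cluster_alg S1 \<in> M_sub S0 H1"
    "cluster_alg S2 \<in> M_sub S0 H2" and img: "f ` cluster_alg S1 = cluster_alg S2" by blast
  have "H2 = conj_aut S0 f ` H1"
    using M Gal_image[OF assms(1) f, of "cluster_alg S1"] unfolding img M_sub_def by auto
  then show "conjugate S0 H1 H2" using f unfolding conjugate_iff_conj_aut by blast
qed

end
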